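(* Let $d:[0,1]^2\to\mathbb{R}$ be a convex function and let $\ell_1,\dots,\ell_t$ be an $\epsilon$-approximate family of $d$. Let $\mathcal{C}\subset[0,1]^2$ be a point set. For each $i$, let $(x_i^*,y_i^* )=\arg\max_{\mathbf{p}\in\mathcal{C}}\ell_i(\mathbf{p}_x,\mathbf{p}_y)$, and let $(x^*,y^* )$ be the point $(x_i^*,y_i^* )$ maximizing $\ell_i(x_i^*,y_i^* )$ over $i=1,\dots,t$. Let $d^*=\sup_{\mathbf{p}\in\mathcal{C}}d(\mathbf{p}_x,\mathbf{p}_y)$, $d_{\inf}=\inf_{\mathbf{q}\in[0,1]^2}d(\mathbf{q}_x,\mathbf{q}_y)$, and $m=\max(l^U(x^*,y^* ),d_{\inf})$. Then $$m\le d^*\le m+\epsilon.$$ If instead $\ell_1,\dots,\ell_t$ is a relative $\epsilon$-approximate family of $d$ (with the same definitions of $x_i^*,y_i^*,x^*,y^*,d^*,d_{\inf},m$), then $$m\le d^*\le(1+\epsilon)m.$$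
   Context: A linear function is $\ell(x,y)=a_1x+a_2y+a_3$. For linear functions $\ell_1,\dots,\ell_t$, their upper envelope is $l^U(x,y)=\max_{i\le t}\ell_i(x,y)$. The collection $\ell_1,\dots,\ell_t$ is an $\epsilon$-approximate family of $d$ if $l^U(x,y)\le d(x,y)\le l^U(x,y)+\epsilon$ for all $(x,y)\in[0,1]^2$; it is a relative $\epsilon$-approximate family of $d$ if $l^U(x,y)\le d(x,y)\le(1+\epsilon)l^U(x,y)$ for all $(x,y)\in[0,1]^2$. *)

theory Defs
  imports "HOL-Analysis.Analysis"
begin

definition unit_square :: "(real \<times> real) set" where
  "unit_square = {0..1} \<times> {0..1}"

definition lin :: "real \<times> real \<times> real \<Rightarrow> real \<times> real \<Rightarrow> real" where
  "lin a p = fst a * fst p + fst (snd a) * snd p + snd (snd a)"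

definition upper_env :: "(nat \<Rightarrow> real \<times> real \<times> real) \<Rightarrow> nat \<Rightarrow> real \<times> real \<Rightarrow> real" where
  "upper_env a t p = Max ((\<lambda>i. lin (a i) p) ` {1..t})"

definition approx_family ::
  "(nat \<Rightarrow> real \<times> real \<times> real) \<Rightarrow> nat \<Rightarrow> real \<Rightarrow> (real \<times> real \<Rightarrow> real) \<Rightarrow> bool" where
  "approx_family a t \<epsilon> d \<longleftrightarrow>
     (\<forall>p\<in>unit_square. upper_env a t p \<le> d p \<and> d p \<le> upper_env a t p + \<epsilon>)"

definition rel_approx_family ::
  "(nat \<Rightarrow> real \<times> real \<times> real) \<Rightarrow> nat \<Rightarrow> real \<Rightarrow> (real \<times> real \<Rightarrow> real) \<Rightarrow> bool" where
  "rel_approx_family a t \<epsilon> d \<longleftrightarrow>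
     (\<forall>p\<in>unit_square. upper_env a t p \<le> d p \<and> d p \<le> (1 + \<epsilon>) * upper_env a t p)"

end

theory Submission
  imports Defs
begin

text \<open>
  Every point of \<open>C\<close> has envelope value at most \<open>l\<^sup>U(x\<^sup>*, y\<^sup>*)\<close>, since each
  \<open>\<ell>\<^sub>i\<close> is maximised over \<open>C\<close> at \<open>(x\<^sub>i\<^sup>*, y\<^sub>i\<^sup>*)\<close> and \<open>(x\<^sup>*, y\<^sup>*)\<close> beats all of these.
  Hence the approximation property bounds \<open>d\<close> on \<open>C\<close> by \<open>m + \<epsilon>\<close>, resp. \<open>(1 + \<epsilon>) m\<close>.
  Conversely \<open>d\<^sup>*\<close> dominates \<open>d(x\<^sup>*, y\<^sup>*)\<close>, which is at least both \<open>l\<^sup>U(x\<^sup>*, y\<^sup>*)\<close> and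
  \<open>d\<^sub>i\<^sub>n\<^sub>f\<close>; the infimum is finite because \<open>d\<close> lies above the envelope, which is
  bounded below on the unit square.
\<close>

lemma SUP_sandwich:
  fixes d f :: "'a \<Rightarrow> real"
  assumes "C \<subseteq> S" "p\<^sub>0 \<in> C"
    and minorant: "\<And>q. q \<in> S \<Longrightarrow> f q \<le> d q"
    and "bdd_below (f ` S)"
    and bound: "\<And>p. p \<in> C \<Longrightarrow> d p \<le> B"
  shows "max (f p\<^sub>0) (INF q\<in>S. d q) \<le> (SUP p\<in>C. d p) \<and> (SUP p\<in>C. d p) \<le> B"
proof -
  have "bdd_above (d ` C)"
    using bound by (rule bdd_aboveI2)
  then have "d p\<^sub>0 \<le> (SUP p\<in>C. d p)"
    using \<open>p\<^sub>0 \<in> C\<close> by (rule cSUP_upper2) simp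
  moreover obtain K where "\<And>q. q \<in> S \<Longrightarrow> K \<le> f q"
    using \<open>bdd_below (f ` S)\<close> by (auto simp: bdd_below_def)
  then have "bdd_below (d ` S)"
    using minorant by (intro bdd_belowI2[where m = K]) (meson order_trans)
  then have "(INF q\<in>S. d q) \<le> d p\<^sub>0"
    using assms(1,2) by (intro cINF_lower) auto
  moreover have "f p\<^sub>0 \<le> d p\<^sub>0"
    using assms(1,2) minorant by auto
  moreover have "(SUP p\<in>C. d p) \<le> B"
    using \<open>p\<^sub>0 \<in> C\<close> bound by (intro cSUP_least) auto
  ultimately show ?thesis
    by simp
qed

lemma lin_le_upper_env: "i \<in> {1..t} \<Longrightarrow> lin (a i) p \<le> upper_env a t p"
  unfolding upper_env_def by (rule Max_ge) auto

lemma upper_env_leI: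
  "t \<ge> 1 \<Longrightarrow> (\<And>i. i \<in> {1..t} \<Longrightarrow> lin (a i) p \<le> B) \<Longrightarrow> upper_env a t p \<le> B"
  unfolding upper_env_def by (subst Max_le_iff) auto

lemma lin_ge_neg_abs_coeffs:
  assumes "p \<in> unit_square"
  shows "- (\<bar>fst a\<bar> + \<bar>fst (snd a)\<bar> + \<bar>snd (snd a)\<bar>) \<le> lin a p"
proof -
  have scaled: "- \<bar>c\<bar> \<le> c * z" if "z \<in> {0..1}" for c z :: real
  proof -
    have "\<bar>c * z\<bar> \<le> \<bar>c\<bar>"
      using that by (simp add: abs_mult mult_left_le)
    then show ?thesis
      by linarith
  qed
  obtain x y where "p = (x, y)" "x \<in> {0..1}" "y \<in> {0..1}"
    using assms unfolding unit_square_def by blast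
  with scaled[of x "fst a"] scaled[of y "fst (snd a)"] show ?thesis
    unfolding lin_def by simp
qed

lemma bdd_below_upper_env:
  assumes "t \<ge> 1"
  shows "bdd_below (upper_env a t ` unit_square)"
proof (rule bdd_belowI2)
  fix q assume "q \<in> unit_square"
  then show "- (\<bar>fst (a 1)\<bar> + \<bar>fst (snd (a 1))\<bar> + \<bar>snd (snd (a 1))\<bar>) \<le> upper_env a t q"
    using lin_ge_neg_abs_coeffs[of q "a 1"] lin_le_upper_env[of 1 t a q] assms by fastforce
qed

lemma upper_env_le_at_best_maximiser:
  assumes "t \<ge> 1" "istar \<in> {1..t}"
    and "\<forall>i\<in>{1..t}. \<forall>p\<in>C. lin (a i) p \<le> lin (a i) (ps i)"
    and "\<forall>i\<in>{1..t}. lin (a i) (ps i) \<le> lin (a istar) (ps istar)"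
    and "p \<in> C"
  shows "upper_env a t p \<le> upper_env a t (ps istar)"
proof (rule upper_env_leI[OF \<open>t \<ge> 1\<close>])
  fix i assume i: "i \<in> {1..t}"
  have "lin (a i) p \<le> lin (a i) (ps i)"
    using assms(3,5) i by blast
  also have "\<dots> \<le> lin (a istar) (ps istar)"
    using assms(4) i by blast
  also have "\<dots> \<le> upper_env a t (ps istar)"
    using lin_le_upper_env[OF \<open>istar \<in> {1..t}\<close>] .
  finally show "lin (a i) p \<le> upper_env a t (ps istar)" .
qed

theorem lemma4p1:
  fixes d :: "real \<times> real \<Rightarrow> real"
    and a :: "nat \<Rightarrow> real \<times> real \<times> real"
    and t :: nat and \<epsilon> :: real
    and C :: "(real \<times> real) set"
    and ps :: "nat \<Rightarrow> real \<times> real"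
    and istar :: nat
  assumes conv: "convex_on unit_square d"
    and t: "t \<ge> 1"
    and eps: "\<epsilon> > 0"
    and C: "C \<subseteq> unit_square"
    and ps: "\<forall>i\<in>{1..t}. ps i \<in> C \<and> (\<forall>p\<in>C. lin (a i) p \<le> lin (a i) (ps i))"
    and istar: "istar \<in> {1..t}"
    and istar_max: "\<forall>i\<in>{1..t}. lin (a i) (ps i) \<le> lin (a istar) (ps istar)"
  shows "(approx_family a t \<epsilon> d \<longrightarrow>
            max (upper_env a t (ps istar)) (INF q\<in>unit_square. d q) \<le> (SUP p\<in>C. d p) \<and>
            (SUP p\<in>C. d p) \<le> max (upper_env a t (ps istar)) (INF q\<in>unit_square. d q) + \<epsilon>)
       \<and> (rel_approx_family a t \<epsilon> d \<longrightarrow>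
            max (upper_env a t (ps istar)) (INF q\<in>unit_square. d q) \<le> (SUP p\<in>C. d p) \<and>
            (SUP p\<in>C. d p) \<le> (1 + \<epsilon>) * max (upper_env a t (ps istar)) (INF q\<in>unit_square. d q))"
proof -
  define m where "m = max (upper_env a t (ps istar)) (INF q\<in>unit_square. d q)"
  have env_le_m: "upper_env a t p \<le> m" if "p \<in> C" for p
    using upper_env_le_at_best_maximiser[OF t istar _ istar_max that] ps unfolding m_def by force
  have sandwich: "m \<le> (SUP p\<in>C. d p) \<and> (SUP p\<in>C. d p) \<le> B"
    if "\<And>q. q \<in> unit_square \<Longrightarrow> upper_env a t q \<le> d q" "\<And>p. p \<in> C \<Longrightarrow> d p \<le> B" for B
    unfolding m_def using C ps istar that bdd_below_upper_env[OF t]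
    by (intro SUP_sandwich[where f = "upper_env a t"]) auto
  have "approx_family a t \<epsilon> d \<longrightarrow> m \<le> (SUP p\<in>C. d p) \<and> (SUP p\<in>C. d p) \<le> m + \<epsilon>"
  proof (intro impI sandwich)
    assume approx: "approx_family a t \<epsilon> d"
    show "upper_env a t q \<le> d q" if "q \<in> unit_square" for q
      using approx that by (simp add: approx_family_def)
    show "d p \<le> m + \<epsilon>" if "p \<in> C" for p
      using approx env_le_m[OF that] C that by (force simp: approx_family_def)
  qed
  moreover have "rel_approx_family a t \<epsilon> d \<longrightarrow>
      m \<le> (SUP p\<in>C. d p) \<and> (SUP p\<in>C. d p) \<le> (1 + \<epsilon>) * m"
  proof (intro impI sandwich)
    assume rel: "rel_approx_family a t \<epsilon> d"
    show "upper_env a t q \<le> d q" if "q \<in> unit_square" for q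
      using rel that by (simp add: rel_approx_family_def)
    show "d p \<le> (1 + \<epsilon>) * m" if "p \<in> C" for p
    proof -
      have "d p \<le> (1 + \<epsilon>) * upper_env a t p"
        using rel C that by (force simp: rel_approx_family_def)
      also have "\<dots> \<le> (1 + \<epsilon>) * m"
        using env_le_m[OF that] eps by (intro mult_left_mono) auto
      finally show ?thesis .
    qed
  qed
  ultimately show ?thesis
    unfolding m_def by blast
qed

end
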